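(* For all $\phi\in C(\mathbb{Z}_p,\mathbb{C}_p)$ and all $y\in\mathbb{Z}_p$, $S^y(\phi)=(\mathbf 1-\mathbf x)^{\star y}\star\phi$.
   Context: Fix a prime $p$. $\mathbb{C}_p$ denotes the completion of an algebraic closure of $\mathbb{Q}_p$, with absolute value $|\cdot|$ normalized by $|p|=1/p$. $C(\mathbb{Z}_p,\mathbb{C}_p)$ is the $\mathbb{C}_p$-Banach space of continuous functions $\mathbb{Z}_p\to\mathbb{C}_p$ with the sup-norm $\|\cdot\|$. For $n\in\mathbb{Z}_{\ge0}$ and $x\in\mathbb{Z}_p$, $\binom{x}{n}=x(x-1)\cdots(x-n+1)/n!$. For $\phi\in C(\mathbb{Z}_p,\mathbb{C}_p)$ let $(\nabla\phi)(x)=\phi(x+1)-\phi(x)$; every such $\phi$ has the Mahler expansion $\phi(x)=\sum_{n\ge0}(\nabla^n\phi)(0)\binom{x}{n}$. The convolution $\phi\star\psi$ of $\phi,\psi\in C(\mathbb{Z}_p,\mathbb{C}_p)$ is the continuous function with Mahler coefficients $(\nabla^n(\phi\star\psi))(0)=\sum_{k=0}^n\binom nk(\nabla^k\phi)(0)(\nabla^{n-k}\psi)(0)$. For $y\in\mathbb{Z}_p$ define $S^y(\phi)(x)=\sum_{k\ge0}(-1)^k k!\binom yk\binom xk\phi(x-k)$. Write $\mathbf 1$ for the constant function $1$ and $\mathbf x$ for $x\mapsto x$, and set $(\mathbf 1-\mathbf x)^{\star y}:=S^y(\mathbf 1)$ for $y\in\mathbb{Z}_p$. *)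

theory Defs
  imports "HOL-Computational_Algebra.Polynomial"
begin

text \<open>We do not construct C_p; instead we fix an arbitrary field K of characteristic 0
with an absolute value nrm satisfying axioms characterizing (K, nrm) up to isometric
isomorphism as C_p: nonarchimedean, |p| = 1/p, complete, algebraically closed, and the
algebraic closure of Q_p (= closure of Q in K) is dense in K.
Z_p is realised as the closure of the integers inside K.\<close>

definition Qp_in :: "('a::field_char_0 \<Rightarrow> real) \<Rightarrow> 'a set" where
  "Qp_in nrm = {z. \<forall>e>0. \<exists>r::rat. nrm (z - of_rat r) < e}"

definition Zp :: "('a::field_char_0 \<Rightarrow> real) \<Rightarrow> 'a set" where
  "Zp nrm = {z. \<forall>e>0. \<exists>n::int. nrm (z - of_int n) < e}"

definition is_Cp :: "nat \<Rightarrow> ('a::field_char_0 \<Rightarrow> real) \<Rightarrow> bool" where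
  "is_Cp p nrm \<longleftrightarrow>
     prime p \<and>
     (\<forall>x. nrm x \<ge> 0) \<and> (\<forall>x. nrm x = 0 \<longleftrightarrow> x = 0) \<and>
     (\<forall>x y. nrm (x * y) = nrm x * nrm y) \<and>
     (\<forall>x y. nrm (x + y) \<le> max (nrm x) (nrm y)) \<and>
     nrm (of_nat p) = 1 / real p \<and>
     (\<forall>X::nat \<Rightarrow> 'a. (\<forall>e>0. \<exists>N. \<forall>m\<ge>N. \<forall>n\<ge>N. nrm (X m - X n) < e) \<longrightarrow>
         (\<exists>L. (\<lambda>n. nrm (X n - L)) \<longlonglongrightarrow> 0)) \<and>
     (\<forall>q::'a poly. degree q > 0 \<longrightarrow> (\<exists>x. poly q x = 0)) \<and>
     (\<forall>x. \<forall>e>0. \<exists>z. nrm (x - z) < e \<and>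
         (\<exists>q::'a poly. q \<noteq> 0 \<and> (\<forall>i. coeff q i \<in> Qp_in nrm) \<and> poly q z = 0))"

text \<open>Continuity of a function Z_p -> C_p (values outside Z_p are irrelevant).\<close>
definition cont_Zp :: "('a::field_char_0 \<Rightarrow> real) \<Rightarrow> ('a \<Rightarrow> 'a) \<Rightarrow> bool" where
  "cont_Zp nrm f \<longleftrightarrow> (\<forall>x\<in>Zp nrm. \<forall>e>0. \<exists>d>0. \<forall>x'\<in>Zp nrm.
       nrm (x' - x) < d \<longrightarrow> nrm (f x' - f x) < e)"

definition nsums :: "('a::field_char_0 \<Rightarrow> real) \<Rightarrow> (nat \<Rightarrow> 'a) \<Rightarrow> 'a \<Rightarrow> bool" where
  "nsums nrm a s \<longleftrightarrow> (\<lambda>N. nrm (s - (\<Sum>k<N. a k))) \<longlonglongrightarrow> 0"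

definition nsum :: "('a::field_char_0 \<Rightarrow> real) \<Rightarrow> (nat \<Rightarrow> 'a) \<Rightarrow> 'a" where
  "nsum nrm a = (THE s. nsums nrm a s)"

definition nabla :: "('a::field_char_0 \<Rightarrow> 'a) \<Rightarrow> 'a \<Rightarrow> 'a" where
  "nabla f = (\<lambda>x. f (x + 1) - f x)"

definition mahler :: "('a::field_char_0 \<Rightarrow> 'a) \<Rightarrow> nat \<Rightarrow> 'a" where
  "mahler f n = (nabla ^^ n) f 0"

definition conv :: "('a::field_char_0 \<Rightarrow> real) \<Rightarrow> ('a \<Rightarrow> 'a) \<Rightarrow> ('a \<Rightarrow> 'a) \<Rightarrow> 'a \<Rightarrow> 'a" where
  "conv nrm f g x = nsum nrm (\<lambda>n.
      (\<Sum>k\<le>n. of_nat (n choose k) * mahler f k * mahler g (n - k)) * (x gchoose n))"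

definition Sop :: "('a::field_char_0 \<Rightarrow> real) \<Rightarrow> 'a \<Rightarrow> ('a \<Rightarrow> 'a) \<Rightarrow> 'a \<Rightarrow> 'a" where
  "Sop nrm y f x = nsum nrm (\<lambda>k.
      (-1) ^ k * fact k * (y gchoose k) * (x gchoose k) * f (x - of_nat k))"

definition one_minus_x_pow :: "('a::field_char_0 \<Rightarrow> real) \<Rightarrow> 'a \<Rightarrow> 'a \<Rightarrow> 'a" where
  "one_minus_x_pow nrm y = Sop nrm y (\<lambda>_. 1)"

end

theory Submission
  imports Defs "HOL-Computational_Algebra.Primes"
begin

text \<open>Both sides are continuous on \<open>\<int>\<^sub>p\<close> and they agree on the dense subset \<open>\<nat>\<close>.
  Each side is a series of continuous functions whose terms tend to \<open>0\<close> uniformly on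
  \<open>\<int>\<^sub>p\<close>: on the left because \<open>|k!| \<rightarrow> 0\<close>; on the right because the Mahler coefficients
  of a continuous function tend to \<open>0\<close> (the easy half of Mahler's theorem, from uniform
  continuity and \<open>\<nabla>\<^bsup>p\<^sup>s\<^esup> \<equiv> \<phi>(\<cdot> + p\<^sup>s) - \<phi>\<close> modulo \<open>p\<close>), and those of
  \<open>(1 - x)\<^bsup>\<star>y\<^esup>\<close> are \<open>(-1)\<^sup>k k! (y choose k)\<close>. At \<open>x = m \<in> \<nat>\<close> both series are
  finite, and expanding \<open>\<phi>(m - k)\<close> by Newton's forward difference formula turns both into
  the same double sum over \<open>i + j \<le> m\<close>.\<close>

section \<open>Ultrametric absolute values\<close>

locale complete_padic_field =
  fixes p :: nat and nrm :: "'a::field_char_0 \<Rightarrow> real"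
  assumes prime_p: "prime p"
    and nrm_nonneg: "nrm x \<ge> 0"
    and nrm_eq_0_iff: "nrm x = 0 \<longleftrightarrow> x = 0"
    and nrm_mult: "nrm (x * y) = nrm x * nrm y"
    and nrm_add_le_max: "nrm (x + y) \<le> max (nrm x) (nrm y)"
    and nrm_of_p: "nrm (of_nat p) = 1 / real p"
    and nrm_complete: "(\<forall>e>0. \<exists>N. \<forall>m\<ge>N. \<forall>n\<ge>N. nrm (X m - X n) < e) \<Longrightarrow>
         \<exists>L. (\<lambda>n. nrm (X n - L)) \<longlonglongrightarrow> 0"

lemma is_Cp_imp_complete_padic_field: "is_Cp p nrm \<Longrightarrow> complete_padic_field p nrm"
  unfolding is_Cp_def complete_padic_field_def by blast

lemma sum_lessThan_diff:
  fixes t :: "nat \<Rightarrow> 'a::ab_group_add"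
  shows "K \<le> n \<Longrightarrow> (\<Sum>k<n. t k) - (\<Sum>k<K. t k) = (\<Sum>k\<in>{K..<n}. t k)"
  by (simp add: atLeast0LessThan[symmetric] sum_diff_nat_ivl)

context complete_padic_field
begin

lemma nrm_zero [simp]: "nrm 0 = 0"
  by (simp add: nrm_eq_0_iff)

lemma nrm_one [simp]: "nrm 1 = 1"
  using nrm_mult[of 1 1] nrm_eq_0_iff[of 1] by simp

lemma nrm_minus_one [simp]: "nrm (-1) = 1"
proof -
  have "nrm (-1) * nrm (-1) = 1" using nrm_mult[of "-1" "-1"] by simp
  then show ?thesis using nrm_nonneg[of "-1"] by (metis mult_cancel_right1 mult_le_one
      nle_le order.strict_iff_not zero_le_one mult_le_cancel_right1)
qed

lemma nrm_uminus [simp]: "nrm (- x) = nrm x"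
  using nrm_mult[of "-1" x] by simp

lemma nrm_minus_commute: "nrm (x - y) = nrm (y - x)"
  by (metis minus_diff_eq nrm_uminus)

lemma nrm_diff_le_max: "nrm (x - y) \<le> max (nrm x) (nrm y)"
  using nrm_add_le_max[of x "- y"] by simp

lemma nrm_ultrametric: "nrm (x - z) \<le> max (nrm (x - y)) (nrm (y - z))"
  using nrm_add_le_max[of "x - y" "y - z"] by simp

lemma nrm_add_less: "nrm x < r \<Longrightarrow> nrm y < r \<Longrightarrow> nrm (x + y) < r"
  by (meson max_less_iff_conj nrm_add_le_max order.strict_trans1)

lemma nrm_ultrametric_le: "nrm (x - y) \<le> r \<Longrightarrow> nrm (y - z) \<le> r \<Longrightarrow> nrm (x - z) \<le> r"
  by (meson max.bounded_iff nrm_ultrametric order_trans)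

lemma nrm_ultrametric_less: "nrm (x - y) < r \<Longrightarrow> nrm (y - z) < r \<Longrightarrow> nrm (x - z) < r"
  by (meson max.strict_boundedE max_less_iff_conj nrm_ultrametric order.strict_trans1)

lemma nrm_power: "nrm (x ^ n) = nrm x ^ n"
  by (induction n) (simp_all add: nrm_mult)

lemma nrm_prod: "nrm (prod f A) = (\<Prod>i\<in>A. nrm (f i))"
  by (induction A rule: infinite_finite_induct) (simp_all add: nrm_mult)

lemma nrm_divide: "nrm (x / y) = nrm x / nrm y"
proof (cases "y = 0")
  case False
  then have "nrm (x / y) * nrm y = nrm x" using nrm_mult[of "x / y" y] by simp
  then show ?thesis using False nrm_eq_0_iff[of y] by (simp add: field_simps)
qed simp

lemma nrm_sum_le: "(\<And>i. i \<in> A \<Longrightarrow> nrm (f i) \<le> B) \<Longrightarrow> B \<ge> 0 \<Longrightarrow> nrm (sum f A) \<le> B"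
  by (induction A rule: infinite_finite_induct)
     (auto intro: order_trans[OF nrm_add_le_max])

lemma nrm_sum_less: "(\<And>i. i \<in> A \<Longrightarrow> nrm (f i) < B) \<Longrightarrow> B > 0 \<Longrightarrow> nrm (sum f A) < B"
  by (induction A rule: infinite_finite_induct)
     (auto intro: order.strict_trans1[OF nrm_add_le_max])

lemma nrm_of_nat_le_1: "nrm (of_nat n) \<le> 1"
  by (induction n) (auto intro: order_trans[OF nrm_add_le_max])

lemma nrm_of_int_le_1: "nrm (of_int n) \<le> 1"
  using nrm_of_nat_le_1[of "nat \<bar>n\<bar>"] nrm_uminus[of "of_int n"]
  by (cases "n \<ge> 0") simp_all

lemma nrm_fact_le_1: "nrm (fact n) \<le> 1"
  using nrm_of_nat_le_1[of "fact n"] by simp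

lemma nrm_fact_pos: "nrm (fact n) > 0"
  using nrm_nonneg[of "fact n"] nrm_eq_0_iff[of "fact n"] by (simp add: less_le)

lemma p_ge_2: "p \<ge> 2"
  using prime_p prime_ge_2_nat by blast

lemma inv_p_pos: "1 / real p > 0"
  using p_ge_2 by simp

lemma inv_p_less_1: "1 / real p < 1"
  using p_ge_2 by simp

lemma inv_p_power_small: "e > 0 \<Longrightarrow> \<exists>s. (1 / real p) ^ s < e"
  using real_arch_pow_inv[OF _ inv_p_less_1] by blast

lemma inv_p_power_antimono: "s \<le> t \<Longrightarrow> (1 / real p) ^ t \<le> (1 / real p) ^ s"
  using inv_p_less_1 inv_p_pos by (simp add: power_decreasing)

lemma nrm_of_p_power: "nrm (of_nat p ^ s) = (1 / real p) ^ s"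
  by (simp add: nrm_power nrm_of_p)

lemma nrm_of_nat_mult_p: "nrm (of_nat (p * n)) \<le> 1 / real p"
proof -
  have "nrm (of_nat (p * n)) = 1 / real p * nrm (of_nat n)"
    by (simp only: of_nat_mult nrm_mult nrm_of_p)
  then show ?thesis using nrm_of_nat_le_1[of n] by (simp add: divide_right_mono)
qed

lemma nrm_of_int_mult_p_power: "nrm (of_int (int p ^ s * n)) \<le> (1 / real p) ^ s"
  using nrm_of_int_le_1[of n] inv_p_pos by (simp add: nrm_mult nrm_of_p_power mult_left_le)

section \<open>The closure \<open>\<int>\<^sub>p\<close> of the integers\<close>

lemma Zp_of_int: "of_int n \<in> Zp nrm"
  unfolding Zp_def by (auto intro!: exI[of _ n])

lemma Zp_of_nat: "of_nat n \<in> Zp nrm"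
  using Zp_of_int[of "int n"] by simp

lemma Zp_add: assumes "z \<in> Zp nrm" "w \<in> Zp nrm" shows "z + w \<in> Zp nrm"
  unfolding Zp_def
proof (intro CollectI allI impI)
  fix e :: real assume "e > 0"
  then obtain n m :: int where "nrm (z - of_int n) < e" "nrm (w - of_int m) < e"
    using assms unfolding Zp_def by blast
  then have "nrm ((z - of_int n) + (w - of_int m)) < e" by (rule nrm_add_less)
  then have "nrm (z + w - of_int (n + m)) < e" by (simp add: algebra_simps)
  then show "\<exists>k::int. nrm (z + w - of_int k) < e" by blast
qed

lemma Zp_uminus: assumes "z \<in> Zp nrm" shows "- z \<in> Zp nrm"
  unfolding Zp_def
proof (intro CollectI allI impI)
  fix e :: real assume "e > 0"
  then obtain n :: int where "nrm (z - of_int n) < e" using assms unfolding Zp_def by blast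
  then have "nrm (- z - of_int (- n)) < e" using nrm_uminus[of "z - of_int n"] by simp
  then show "\<exists>k::int. nrm (- z - of_int k) < e" by blast
qed

lemma Zp_diff: "z \<in> Zp nrm \<Longrightarrow> w \<in> Zp nrm \<Longrightarrow> z - w \<in> Zp nrm"
  using Zp_add[of z "- w"] Zp_uminus[of w] by simp

lemma Zp_nrm_le_1: assumes "z \<in> Zp nrm" shows "nrm z \<le> 1"
proof -
  obtain n :: int where "nrm (z - of_int n) < 1" using assms unfolding Zp_def by force
  then show ?thesis
    using nrm_add_le_max[of "z - of_int n" "of_int n"] nrm_of_int_le_1[of n] by simp
qed

lemma Zp_approx_residue:
  assumes "z \<in> Zp nrm" shows "\<exists>j<p ^ s. nrm (z - of_nat j) \<le> (1 / real p) ^ s"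
proof -
  have "(1 / real p) ^ s > 0" using inv_p_pos by simp
  then obtain n :: int where n: "nrm (z - of_int n) < (1 / real p) ^ s"
    using assms unfolding Zp_def by blast
  define P where "P = int p ^ s"
  have P: "P > 0" using p_ge_2 by (simp add: P_def)
  define j where "j = nat (n mod P)"
  have j: "j < p ^ s" using P unfolding j_def P_def
    by (metis nat_less_iff of_nat_power pos_mod_bound pos_mod_sign)
  have "n - int j = P * (n div P)"
    using P by (simp add: j_def minus_mod_eq_mult_div)
  then have "of_int n - of_nat j = (of_int (P * (n div P)) :: 'a)"
    by (metis of_int_diff of_int_of_nat_eq)
  then have "nrm (of_int n - of_nat j :: 'a) \<le> (1 / real p) ^ s"
    using nrm_of_int_mult_p_power unfolding P_def by metis
  then have "nrm (z - of_nat j) \<le> (1 / real p) ^ s"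
    using n nrm_ultrametric[of z "of_nat j" "of_int n"] by simp
  then show ?thesis using j by blast
qed

lemma Zp_approx_nat: assumes "z \<in> Zp nrm" "e > 0" shows "\<exists>j. nrm (z - of_nat j) < e"
  using Zp_approx_residue[OF assms(1)] inv_p_power_small[OF assms(2)] by (meson le_less_trans)

lemma nrm_prod_diff_le:
  assumes "\<And>i. i \<in> A \<Longrightarrow> nrm (u i) \<le> 1 \<and> nrm (v i) \<le> 1 \<and> nrm (u i - v i) \<le> B" "B \<ge> 0"
  shows "nrm (prod u A - prod v A) \<le> B"
  using assms
proof (induction A rule: infinite_finite_induct)
  case (insert x F)
  have IH: "nrm (prod u F - prod v F) \<le> B" and x: "nrm (u x) \<le> 1" "nrm (u x - v x) \<le> B"
    using insert by auto
  have "nrm (prod v F) \<le> 1" using insert by (auto simp: nrm_prod intro!: prod_le_1 nrm_nonneg)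
  then have "nrm (u x) * nrm (prod u F - prod v F) \<le> 1 * B"
    "nrm (u x - v x) * nrm (prod v F) \<le> B * 1"
    using x IH insert.prems(2) by (simp_all only: mult_mono nrm_nonneg zero_le_one)
  then have "nrm (u x * (prod u F - prod v F)) \<le> B" "nrm ((u x - v x) * prod v F) \<le> B"
    by (simp_all add: nrm_mult)
  moreover have "prod u (insert x F) - prod v (insert x F)
      = u x * (prod u F - prod v F) + (u x - v x) * prod v F"
    using insert(1,2) by (simp add: algebra_simps)
  ultimately show ?case by (metis order_trans[OF nrm_add_le_max max.boundedI])
qed simp_all

lemma nrm_gbinomial_diff_le:
  assumes "z \<in> Zp nrm" "w \<in> Zp nrm"
  shows "nrm ((z gchoose k) - (w gchoose k)) \<le> nrm (z - w) / nrm (fact k :: 'a)"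
proof -
  have "(z gchoose k) - (w gchoose k)
      = ((\<Prod>i=0..<k. z - of_nat i) - (\<Prod>i=0..<k. w - of_nat i)) / fact k"
    by (simp add: gbinomial_prod_rev diff_divide_distrib)
  moreover have "nrm ((\<Prod>i=0..<k. z - of_nat i) - (\<Prod>i=0..<k. w - of_nat i)) \<le> nrm (z - w)"
    by (rule nrm_prod_diff_le) (auto intro!: Zp_nrm_le_1 Zp_diff assms Zp_of_nat nrm_nonneg)
  ultimately show ?thesis using nrm_fact_pos[of k] by (simp add: nrm_divide divide_right_mono)
qed

lemma nrm_gbinomial_le_1: assumes "z \<in> Zp nrm" shows "nrm (z gchoose k) \<le> 1"
proof -
  obtain j where j: "nrm (z - of_nat j) < nrm (fact k :: 'a)"
    using Zp_approx_nat[OF assms nrm_fact_pos] by blast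
  have "nrm (z - of_nat j) / nrm (fact k :: 'a) \<le> 1"
    using j nrm_fact_pos[of k] by simp
  then have "nrm ((z gchoose k) - (of_nat j gchoose k)) \<le> 1"
    using nrm_gbinomial_diff_le[OF assms Zp_of_nat, of k j] by linarith
  moreover have "nrm (of_nat j gchoose k :: 'a) \<le> 1"
    using nrm_of_nat_le_1 by (simp add: binomial_gbinomial[symmetric])
  ultimately show ?thesis
    using nrm_add_le_max[of "(z gchoose k) - (of_nat j gchoose k)" "of_nat j gchoose k"] by simp
qed

section \<open>Null sequences and series\<close>

definition nrm_null :: "(nat \<Rightarrow> 'a) \<Rightarrow> bool" where
  "nrm_null u \<longleftrightarrow> (\<forall>e>0. \<exists>K. \<forall>n\<ge>K. nrm (u n) < e)"

definition uniformly_null_on :: "'b set \<Rightarrow> ('b \<Rightarrow> nat \<Rightarrow> 'a) \<Rightarrow> bool" where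
  "uniformly_null_on A t \<longleftrightarrow> (\<forall>e>0. \<exists>K. \<forall>k\<ge>K. \<forall>z\<in>A. nrm (t z k) < e)"

lemma nrm_fact_p_mult: "nrm (fact (p * m) :: 'a) \<le> (1 / real p) ^ m"
proof (induction m)
  case (Suc m)
  have "fact (p * m) dvd (fact (p * Suc m - 1) :: nat)"
    using p_ge_2 by (intro fact_dvd) simp
  then obtain r :: nat where r: "fact (p * Suc m - 1) = fact (p * m) * r" by blast
  have "(fact (p * Suc m) :: nat) = p * Suc m * (fact (p * m) * r)"
    using p_ge_2 fact_reduce[of "p * Suc m", where 'a=nat] r by simp
  then have "(fact (p * Suc m) :: 'a) = of_nat p * of_nat (Suc m) * (fact (p * m) * of_nat r)"
    by (metis of_nat_fact of_nat_mult)
  then have "nrm (fact (p * Suc m) :: 'a)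
      = 1 / real p * nrm (of_nat (Suc m) :: 'a) * (nrm (fact (p * m) :: 'a) * nrm (of_nat r :: 'a))"
    by (simp only: nrm_mult nrm_of_p)
  also have "\<dots> \<le> 1 / real p * 1 * ((1 / real p) ^ m * 1)"
    using nrm_of_nat_le_1 Suc.IH inv_p_pos
    by (intro mult_mono mult_left_mono) (simp_all add: nrm_nonneg del: of_nat_Suc)
  finally show ?case by simp
qed simp

lemma nrm_fact_null: "nrm_null fact"
  unfolding nrm_null_def
proof (intro allI impI)
  fix e :: real assume "e > 0"
  then obtain m where m: "(1 / real p) ^ m < e" using inv_p_power_small by blast
  have "nrm (fact k :: 'a) < e" if "k \<ge> p * m" for k
  proof -
    have "fact (p * m) dvd (fact k :: nat)" using that by (rule fact_dvd)
    then obtain r :: nat where "fact k = fact (p * m) * r" by blast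
    then have "nrm (fact k :: 'a) = nrm (fact (p * m) :: 'a) * nrm (of_nat r :: 'a)"
      by (metis nrm_mult of_nat_fact of_nat_mult)
    also have "\<dots> \<le> nrm (fact (p * m) :: 'a)"
      using nrm_of_nat_le_1[of r] by (simp add: mult_left_le nrm_nonneg)
    finally show ?thesis using nrm_fact_p_mult[of m] m by simp
  qed
  then show "\<exists>K. \<forall>n\<ge>K. nrm (fact n :: 'a) < e" by blast
qed

lemma uniformly_null_on_mult:
  assumes "nrm_null c" and "\<And>z k. z \<in> A \<Longrightarrow> nrm (w z k) \<le> B"
  shows "uniformly_null_on A (\<lambda>z k. c k * w z k)"
  unfolding uniformly_null_on_def
proof (intro allI impI)
  fix e :: real assume e: "e > 0"
  define B' where "B' = max B 0 + 1"
  have "B \<le> B'" "B' > 0" unfolding B'_def by simp_all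
  then have B': "B' > 0" "\<And>z k. z \<in> A \<Longrightarrow> nrm (w z k) \<le> B'"
    using assms(2) by (auto intro: order_trans)
  obtain K where K: "\<forall>k\<ge>K. nrm (c k) < e / B'"
    using assms(1) e B' unfolding nrm_null_def by (meson divide_pos_pos)
  have "nrm (c k * w z k) < e" if "k \<ge> K" "z \<in> A" for k z
  proof -
    have "nrm (c k) * nrm (w z k) \<le> nrm (c k) * B'"
      using B' that by (simp add: mult_left_mono nrm_nonneg)
    also have "\<dots> < e / B' * B'"
      using K that B' by (simp only: mult_strict_right_mono)
    finally have "nrm (c k) * nrm (w z k) < e / B' * B'" .
    then show ?thesis using B' by (simp add: nrm_mult)
  qed
  then show "\<exists>K. \<forall>k\<ge>K. \<forall>z\<in>A. nrm (c k * w z k) < e" by blast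
qed

lemma nsums_unique: assumes "nsums nrm t s" "nsums nrm t s'" shows "s = s'"
proof (rule ccontr)
  assume "s \<noteq> s'"
  then have e: "nrm (s - s') > 0" using nrm_nonneg nrm_eq_0_iff by (simp add: less_le)
  obtain n where "nrm (s - (\<Sum>k<n. t k)) < nrm (s - s')" "nrm (s' - (\<Sum>k<n. t k)) < nrm (s - s')"
    using eventually_conj[OF order_tendstoD(2)[OF assms(1)[unfolded nsums_def] e]
                             order_tendstoD(2)[OF assms(2)[unfolded nsums_def] e]]
    unfolding eventually_sequentially by auto
  then show False
    using nrm_ultrametric[of s s' "\<Sum>k<n. t k"] nrm_minus_commute[of s'] by auto
qed

lemma nsum_eqI: "nsums nrm t s \<Longrightarrow> nsum nrm t = s"
  unfolding nsum_def using nsums_unique by blast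

lemma nsums_nsum_if_null:
  assumes "nrm_null t" shows "nsums nrm t (nsum nrm t)"
proof -
  define X where "X n = (\<Sum>k<n. t k)" for n
  have ordered: "nrm (X m - X n) < e"
    if "e > 0" "n \<le> m" "n \<ge> K" "\<forall>k\<ge>K. nrm (t k) < e" for e m n K
  proof -
    have "nrm (\<Sum>k\<in>{n..<m}. t k) < e"
      using that by (intro nrm_sum_less) auto
    then show ?thesis using sum_lessThan_diff[OF that(2), where t = t] unfolding X_def by simp
  qed
  have "nrm (X m - X n) < e" if "e > 0" "m \<ge> K" "n \<ge> K" "\<forall>k\<ge>K. nrm (t k) < e" for e m n K
    using ordered[of e n m K] ordered[of e m n K] that nrm_minus_commute[of "X m"]
    by (cases "n \<le> m") auto
  then obtain L where "(\<lambda>n. nrm (X n - L)) \<longlonglongrightarrow> 0"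
    using nrm_complete[of X] assms unfolding nrm_null_def by meson
  then have "nsums nrm t L"
    unfolding nsums_def X_def by (simp add: nrm_minus_commute)
  then show ?thesis using nsum_eqI by simp
qed

lemma nsum_eq_sum_atMost: assumes "\<forall>k>m. t k = 0" shows "nsum nrm t = (\<Sum>k\<le>m. t k)"
proof (rule nsum_eqI)
  have "(\<Sum>k<n. t k) = (\<Sum>k\<le>m. t k)" if "n > m" for n
    using sum_lessThan_diff[of "Suc m" n, where t = t] that assms by (simp add: lessThan_Suc_atMost)
  then have "\<forall>\<^sub>F n in sequentially. nrm ((\<Sum>k\<le>m. t k) - (\<Sum>k<n. t k)) = 0"
    unfolding eventually_sequentially by (metis Suc_le_eq diff_self nrm_zero)
  then show "nsums nrm t (\<Sum>k\<le>m. t k)"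
    unfolding nsums_def by (simp add: tendsto_eventually)
qed

lemma nsums_tail_le:
  assumes "nsums nrm t s" "\<forall>k\<ge>K. nrm (t k) \<le> e" "e > 0"
  shows "nrm (s - (\<Sum>k<K. t k)) \<le> e"
proof -
  obtain n where n: "n \<ge> K" "nrm (s - (\<Sum>k<n. t k)) < e"
    using order_tendstoD(2)[OF assms(1)[unfolded nsums_def] assms(3)]
    unfolding eventually_sequentially by (metis nle_le)
  have "nrm (\<Sum>k\<in>{K..<n}. t k) \<le> e"
    using assms(2,3) by (intro nrm_sum_le) auto
  then have "nrm ((\<Sum>k<n. t k) - (\<Sum>k<K. t k)) \<le> e"
    using sum_lessThan_diff[OF n(1), where t = t] by simp
  then show ?thesis
    using n(2) nrm_ultrametric[of s "\<Sum>k<K. t k" "\<Sum>k<n. t k"] by simp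
qed

end

section \<open>Forward differences\<close>

lemma nabla_funpow_shift: "(nabla ^^ n) (\<lambda>x. f (x + c)) x = (nabla ^^ n) f (x + c)"
  by (induction n arbitrary: x) (simp_all add: nabla_def add_ac)

lemma sum_binomial_Pascal:
  fixes d :: "nat \<Rightarrow> 'a::comm_ring_1"
  shows "(\<Sum>j\<le>n. of_nat (n choose j) * (d j + d (Suc j)))
       = (\<Sum>j\<le>Suc n. of_nat (Suc n choose j) * d j)"
proof -
  have "(\<Sum>j\<le>n. of_nat (n choose j) * d j) = (\<Sum>j\<le>Suc n. of_nat (n choose j) * d j)"
    by (simp add: binomial_eq_0)
  also have "\<dots> = d 0 + (\<Sum>j\<le>n. of_nat (n choose Suc j) * d (Suc j))"
    by (simp only: sum.atMost_Suc_shift) simp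
  finally have "(\<Sum>j\<le>n. of_nat (n choose j) * d j)
      = d 0 + (\<Sum>j\<le>n. of_nat (n choose Suc j) * d (Suc j))" .
  moreover have "(\<Sum>j\<le>Suc n. of_nat (Suc n choose j) * d j)
      = d 0 + (\<Sum>j\<le>n. of_nat (n choose j) * d (Suc j))
            + (\<Sum>j\<le>n. of_nat (n choose Suc j) * d (Suc j))"
    by (simp add: sum.atMost_Suc_shift ring_distribs sum.distrib del: sum.atMost_Suc binomial_Suc_Suc)
       (simp add: ring_distribs sum.distrib)
  ultimately show ?thesis by (simp add: ring_distribs sum.distrib)
qed

lemma mahler_expansion_of_nat: "f (of_nat n) = (\<Sum>j\<le>n. of_nat (n choose j) * mahler f j)"
proof (induction n arbitrary: f)
  case (Suc n)
  have "f (of_nat (Suc n)) = (\<Sum>j\<le>n. of_nat (n choose j) * mahler (\<lambda>x. f (x + 1)) j)"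
    using Suc.IH[of "\<lambda>x. f (x + 1)"] by (simp add: add.commute)
  also have "\<dots> = (\<Sum>j\<le>n. of_nat (n choose j) * (mahler f j + mahler f (Suc j)))"
    by (simp add: mahler_def nabla_funpow_shift nabla_def)
  also have "\<dots> = (\<Sum>j\<le>Suc n. of_nat (Suc n choose j) * mahler f j)"
    by (rule sum_binomial_Pascal)
  finally show ?case .
qed (simp add: mahler_def)

lemma binomial_transform_eqD:
  fixes a b :: "nat \<Rightarrow> 'a::comm_ring_1"
  assumes "\<And>N. (\<Sum>k\<le>N. of_nat (N choose k) * a k) = (\<Sum>k\<le>N. of_nat (N choose k) * b k)"
  shows "a n = b n"
proof (induction n rule: less_induct)
  case (less n)
  then have "(\<Sum>k<n. of_nat (n choose k) * a k) = (\<Sum>k<n. of_nat (n choose k) * b k)" by simp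
  then show ?case using assms[of n] by (simp add: lessThan_Suc_atMost[symmetric])
qed

lemma mahler_eqI:
  assumes "\<And>N. f (of_nat N) = (\<Sum>k\<le>N. of_nat (N choose k) * c k)"
  shows "mahler f k = c k"
  by (rule binomial_transform_eqD) (metis assms mahler_expansion_of_nat)

lemma nabla_funpow_explicit:
  "(nabla ^^ n) f x = (\<Sum>i\<le>n. (-1) ^ (n + i) * of_nat (n choose i) * f (x + of_nat i))"
proof (induction n arbitrary: x)
  case (Suc n)
  define d where "d i = (-1) ^ (Suc n + i) * f (x + of_nat i)" for i
  have "(nabla ^^ Suc n) f x = (nabla ^^ n) f (x + 1) - (nabla ^^ n) f x"
    by (simp add: nabla_def)
  also have "\<dots> = (\<Sum>i\<le>n. of_nat (n choose i) * (d i + d (Suc i)))"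
    unfolding Suc.IH sum_subtractf[symmetric] by (intro sum.cong refl) (simp add: d_def algebra_simps)
  also have "\<dots> = (\<Sum>i\<le>Suc n. of_nat (Suc n choose i) * d i)"
    by (rule sum_binomial_Pascal)
  finally show ?case by (simp add: d_def mult_ac)
qed simp

lemma prime_dvd_choose_prime_power:
  assumes "prime (p::nat)" "0 < i" "i < p ^ s"
  shows "p dvd (p ^ s choose i)"
proof (rule ccontr)
  assume "\<not> p dvd (p ^ s choose i)"
  then have "coprime (p ^ s) (p ^ s choose i)"
    using assms(1) by (simp add: prime_imp_coprime)
  moreover have "p ^ s dvd i * (p ^ s choose i)"
    using times_binomial_minus1_eq[OF assms(2), of "p ^ s"] by simp
  ultimately have "p ^ s dvd i" using coprime_dvd_mult_left_iff by blast
  then show False using assms(2,3) by (simp add: nat_dvd_not_less)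
qed

section \<open>Continuous functions on \<open>\<int>\<^sub>p\<close>\<close>

context complete_padic_field
begin

definition Zp_ball :: "nat \<Rightarrow> nat \<Rightarrow> 'a set" where
  "Zp_ball j s = {z \<in> Zp nrm. nrm (z - of_nat j) \<le> (1 / real p) ^ s}"

definition unif_cont_upto :: "real \<Rightarrow> ('a \<Rightarrow> 'a) \<Rightarrow> 'a set \<Rightarrow> bool" where
  "unif_cont_upto e f A \<longleftrightarrow>
     (\<exists>t. \<forall>u\<in>A. \<forall>v\<in>A. nrm (u - v) \<le> (1 / real p) ^ t \<longrightarrow> nrm (f u - f v) < e)"

lemma unif_cont_upto_Zp_ball_split:
  assumes "\<And>j'. j' < p ^ Suc s \<Longrightarrow> nrm (of_nat j' - of_nat j) \<le> (1 / real p) ^ s \<Longrightarrow>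
             unif_cont_upto e f (Zp_ball j' (Suc s))"
  shows "unif_cont_upto e f (Zp_ball j s)"
proof -
  obtain T where T: "\<And>j' u v. j' < p ^ Suc s \<Longrightarrow> nrm (of_nat j' - of_nat j) \<le> (1 / real p) ^ s \<Longrightarrow>
      u \<in> Zp_ball j' (Suc s) \<Longrightarrow> v \<in> Zp_ball j' (Suc s) \<Longrightarrow>
      nrm (u - v) \<le> (1 / real p) ^ T j' \<Longrightarrow> nrm (f u - f v) < e"
    using assms unfolding unif_cont_upto_def by metis
  define T0 where "T0 = Suc s + (\<Sum>j'<p ^ Suc s. T j')"
  have "nrm (f u - f v) < e"
    if u: "u \<in> Zp_ball j s" and v: "v \<in> Zp_ball j s" and uv: "nrm (u - v) \<le> (1 / real p) ^ T0"
    for u v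
  proof -
    have uZ: "u \<in> Zp nrm" and vZ: "v \<in> Zp nrm" using u v unfolding Zp_ball_def by auto
    obtain j' where j': "j' < p ^ Suc s" "nrm (u - of_nat j') \<le> (1 / real p) ^ Suc s"
      using Zp_approx_residue[OF uZ] by blast
    have T0_ge: "T j' \<le> T0" "Suc s \<le> T0"
      using member_le_sum[of j' "{..<p ^ Suc s}" T] j'(1) unfolding T0_def by auto
    have "nrm (of_nat j' - u) \<le> (1 / real p) ^ s"
      using j'(2) inv_p_power_antimono[of s "Suc s"] nrm_minus_commute[of u] by simp
    then have child: "nrm (of_nat j' - of_nat j) \<le> (1 / real p) ^ s"
      using u nrm_ultrametric_le unfolding Zp_ball_def by blast
    have "nrm (v - u) \<le> (1 / real p) ^ Suc s"
      using uv inv_p_power_antimono[OF T0_ge(2)] nrm_minus_commute[of u] by simp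
    then have "v \<in> Zp_ball j' (Suc s)"
      using vZ j'(2) nrm_ultrametric_le unfolding Zp_ball_def by blast
    moreover have "u \<in> Zp_ball j' (Suc s)" using uZ j'(2) unfolding Zp_ball_def by simp
    moreover have "nrm (u - v) \<le> (1 / real p) ^ T j'"
      using uv inv_p_power_antimono[OF T0_ge(1)] by simp
    ultimately show ?thesis using T j'(1) child by blast
  qed
  then show ?thesis unfolding unif_cont_upto_def by blast
qed

lemma nrm_geometric_Cauchy_limit:
  assumes step: "\<And>s. nrm (X (Suc s) - X s) \<le> (1 / real p) ^ s"
  shows "\<exists>L. \<forall>s. nrm (L - X s) \<le> (1 / real p) ^ s"
proof -
  have Cauchy: "nrm (X m - X n) \<le> (1 / real p) ^ n" if "n \<le> m" for m n
    using that
  proof (induction m rule: dec_induct)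
    case (step m)
    then show ?case
      using nrm_ultrametric[of "X (Suc m)" "X n" "X m"] assms[of m] inv_p_power_antimono[of n m]
      by simp
  qed simp
  have "\<exists>N. \<forall>m\<ge>N. \<forall>n\<ge>N. nrm (X m - X n) < e" if "e > 0" for e
  proof -
    obtain N where N: "(1 / real p) ^ N < e" using inv_p_power_small \<open>e > 0\<close> by blast
    have "nrm (X m - X n) < e" if "m \<ge> N" "n \<ge> N" "n \<le> m" for m n
      using Cauchy[OF that(3)] inv_p_power_antimono[OF that(2)] N by simp
    then show ?thesis by (metis nle_le nrm_minus_commute)
  qed
  then obtain L where L: "(\<lambda>n. nrm (X n - L)) \<longlonglongrightarrow> 0"
    using nrm_complete by blast
  have "nrm (L - X s) \<le> (1 / real p) ^ s" for s
  proof -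
    obtain n where n: "n \<ge> s" "nrm (X n - L) < (1 / real p) ^ s"
      using order_tendstoD(2)[OF L, of "(1 / real p) ^ s"] inv_p_pos
      unfolding eventually_sequentially by (metis nle_le zero_less_power)
    then show ?thesis
      using Cauchy[OF n(1)] nrm_ultrametric[of L "X s" "X n"] nrm_minus_commute[of L] by simp
  qed
  then show ?thesis by blast
qed

lemma Zp_geometric_limit:
  assumes "\<And>s. nrm (of_nat (js (Suc s)) - of_nat (js s)) \<le> (1 / real p) ^ s"
  obtains L where "L \<in> Zp nrm" "\<And>s. nrm (L - of_nat (js s)) \<le> (1 / real p) ^ s"
proof -
  obtain L where L: "\<And>s. nrm (L - of_nat (js s)) \<le> (1 / real p) ^ s"
    using nrm_geometric_Cauchy_limit[of "\<lambda>s. of_nat (js s)", OF assms] by blast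
  have "L \<in> Zp nrm" unfolding Zp_def
  proof (intro CollectI allI impI)
    fix r :: real assume "r > 0"
    then obtain s where "(1 / real p) ^ s < r" using inv_p_power_small by blast
    then have "nrm (L - of_int (int (js s))) < r" using L[of s] by simp
    then show "\<exists>n::int. nrm (L - of_int n) < r" by blast
  qed
  with L show ?thesis using that by blast
qed

lemma cont_Zp_unif_cont_upto_Zp_ball_near:
  assumes cont: "cont_Zp nrm f" and "L \<in> Zp nrm" "e > 0"
  obtains s where "\<And>j. nrm (L - of_nat j) \<le> (1 / real p) ^ s \<Longrightarrow> unif_cont_upto e f (Zp_ball j s)"
proof -
  obtain d where d: "d > 0" "\<And>u. u \<in> Zp nrm \<Longrightarrow> nrm (u - L) < d \<Longrightarrow> nrm (f u - f L) < e"
    using assms unfolding cont_Zp_def by blast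
  obtain s where s: "(1 / real p) ^ s < d" using inv_p_power_small d(1) by blast
  have "unif_cont_upto e f (Zp_ball j s)" if L: "nrm (L - of_nat j) \<le> (1 / real p) ^ s" for j
  proof -
    have near: "nrm (f u - f L) < e" if "u \<in> Zp_ball j s" for u
    proof (rule d(2))
      show "u \<in> Zp nrm" using that unfolding Zp_ball_def by simp
      have "nrm (u - of_nat j) \<le> (1 / real p) ^ s" using that unfolding Zp_ball_def by simp
      moreover have "nrm (of_nat j - L) \<le> (1 / real p) ^ s"
        using L nrm_minus_commute[of L] by simp
      ultimately show "nrm (u - L) < d" using s nrm_ultrametric_le by (meson le_less_trans)
    qed
    have "nrm (f u - f v) < e" if "u \<in> Zp_ball j s" "v \<in> Zp_ball j s" for u v
      using near[OF that(1)] near[OF that(2)] nrm_minus_commute[of "f L" "f v"]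
      by (metis nrm_ultrametric_less)
    then show ?thesis unfolding unif_cont_upto_def by blast
  qed
  then show ?thesis using that by blast
qed

text \<open>Koenig's lemma: a ball on which \<open>f\<close> is not uniformly \<open>e\<close>-continuous has a child ball
  with the same defect, and the resulting nested balls shrink to a point of \<open>\<int>\<^sub>p\<close> at which
  continuity of \<open>f\<close> is violated.\<close>
lemma cont_Zp_imp_unif_cont_upto:
  assumes cont: "cont_Zp nrm f" and "e > 0"
  shows "unif_cont_upto e f (Zp nrm)"
proof (rule ccontr)
  assume "\<not> unif_cont_upto e f (Zp nrm)"
  moreover have "Zp_ball 0 0 = Zp nrm" unfolding Zp_ball_def using Zp_nrm_le_1 by auto
  ultimately have start: "\<exists>j. \<not> unif_cont_upto e f (Zp_ball j 0)" by metis
  have step: "\<exists>j'. \<not> unif_cont_upto e f (Zp_ball j' (Suc s)) \<and>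
                     nrm (of_nat j' - of_nat j) \<le> (1 / real p) ^ s"
    if "\<not> unif_cont_upto e f (Zp_ball j s)" for j s
    using unif_cont_upto_Zp_ball_split that by blast
  obtain js where js: "\<And>s. \<not> unif_cont_upto e f (Zp_ball (js s) s)"
    "\<And>s. nrm (of_nat (js (Suc s)) - of_nat (js s)) \<le> (1 / real p) ^ s"
    using dependent_nat_choice[where P = "\<lambda>s j. \<not> unif_cont_upto e f (Zp_ball j s)"
        and Q = "\<lambda>s j j'. nrm (of_nat j' - of_nat j) \<le> (1 / real p) ^ s", OF start step]
    by blast
  obtain L where "L \<in> Zp nrm" "\<And>s. nrm (L - of_nat (js s)) \<le> (1 / real p) ^ s"
    using Zp_geometric_limit[OF js(2)] by blast
  with cont_Zp_unif_cont_upto_Zp_ball_near[OF cont _ \<open>e > 0\<close>] js(1) show False by metis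
qed

lemma cont_Zp_bounded:
  assumes "cont_Zp nrm f"
  obtains M where "M \<ge> 0" "\<And>z. z \<in> Zp nrm \<Longrightarrow> nrm (f z) \<le> M"
proof -
  obtain t where t: "\<And>u v. u \<in> Zp nrm \<Longrightarrow> v \<in> Zp nrm \<Longrightarrow>
      nrm (u - v) \<le> (1 / real p) ^ t \<Longrightarrow> nrm (f u - f v) < 1"
    using cont_Zp_imp_unif_cont_upto[OF assms, of 1] unfolding unif_cont_upto_def by auto
  define M where "M = 1 + (\<Sum>j<p ^ t. nrm (f (of_nat j)))"
  have "nrm (f z) \<le> M" if z: "z \<in> Zp nrm" for z
  proof -
    obtain j where j: "j < p ^ t" "nrm (z - of_nat j) \<le> (1 / real p) ^ t"
      using Zp_approx_residue[OF z] by blast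
    have "nrm (f z - f (of_nat j)) < 1" using t[OF z Zp_of_nat j(2)] .
    moreover have "nrm (f (of_nat j)) \<le> (\<Sum>j<p ^ t. nrm (f (of_nat j)))"
      using j(1) by (intro member_le_sum) (auto simp: nrm_nonneg)
    moreover have "0 \<le> (\<Sum>j<p ^ t. nrm (f (of_nat j)))" by (simp add: sum_nonneg nrm_nonneg)
    ultimately have "nrm (f z - f (of_nat j)) \<le> M" "nrm (f (of_nat j) - 0) \<le> M"
      unfolding M_def by simp_all
    then show ?thesis using nrm_ultrametric_le by fastforce
  qed
  moreover have "M \<ge> 0" unfolding M_def by (simp add: nrm_nonneg sum_nonneg add_nonneg_nonneg)
  ultimately show ?thesis using that by blast
qed

lemma Zp_plus_1: "x \<in> Zp nrm \<Longrightarrow> x + 1 \<in> Zp nrm"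
  using Zp_add[OF _ Zp_of_nat[of 1]] by simp

lemma nabla_funpow_bounded:
  assumes "\<And>x. x \<in> Zp nrm \<Longrightarrow> nrm (f x) \<le> M" and "x \<in> Zp nrm"
  shows "nrm ((nabla ^^ k) f x) \<le> M"
  using assms(2)
proof (induction k arbitrary: x)
  case (Suc k)
  then show ?case
    using Zp_plus_1 by (simp add: nabla_def order_trans[OF nrm_diff_le_max max.boundedI])
qed (use assms(1) in simp)

lemma nabla_funpow_translate_le:
  assumes "\<And>x. x \<in> Zp nrm \<Longrightarrow> nrm (f (x + c) - f x) \<le> e" and "x \<in> Zp nrm"
  shows "nrm ((nabla ^^ k) f (x + c) - (nabla ^^ k) f x) \<le> e"
  using assms(2)
proof (induction k arbitrary: x)
  case (Suc k)
  define h where "h = (nabla ^^ k) f"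
  have "(nabla ^^ Suc k) f (x + c) - (nabla ^^ Suc k) f x
      = (h (x + 1 + c) - h (x + 1)) - (h (x + c) - h x)"
    by (simp add: nabla_def h_def algebra_simps)
  then show ?case
    using Suc Zp_plus_1 unfolding h_def by (simp add: order_trans[OF nrm_diff_le_max max.boundedI])
qed (use assms(1) in simp)

text \<open>The coefficients of \<open>\<nabla>\<^bsup>p\<^sup>s\<^esup> f - (f(\<cdot> + p\<^sup>s) - f)\<close> are divisible by \<open>p\<close>.\<close>
lemma nrm_nabla_prime_power_coeff:
  assumes "s \<ge> 1" "i \<le> p ^ s"
  shows "nrm ((-1) ^ (p ^ s + i) * of_nat (p ^ s choose i)
              - (if i = p ^ s then 1 else 0) + (if i = 0 then 1 else 0) :: 'a) \<le> 1 / real p"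
proof -
  define q where "q = p ^ s"
  have "p ^ 1 \<le> q" unfolding q_def using assms(1) p_ge_2 by (intro power_increasing) auto
  then have q2: "q \<ge> 2" using p_ge_2 by simp
  consider "i = q" | "i = 0" | "0 < i \<and> i < q" using assms(2) q_def by linarith
  then show ?thesis
  proof cases
    case 1
    then show ?thesis using q2 inv_p_pos unfolding q_def[symmetric] by (simp flip: mult_2)
  next
    case 2
    have "((-1) ^ q + 1 :: 'a) = (if p = 2 then of_nat p else 0)"
    proof (cases "p = 2")
      case True
      then have "even q" using assms(1) unfolding q_def by simp
      then show ?thesis using True by simp
    next
      case False
      then have "odd q" using prime_odd_nat[OF prime_p] p_ge_2 unfolding q_def by simp
      then show ?thesis using False by simp
    qed
    then show ?thesis using 2 q2 inv_p_pos nrm_of_p unfolding q_def[symmetric] by auto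
  next
    case 3
    then obtain r where "q choose i = p * r"
      using prime_dvd_choose_prime_power[OF prime_p] unfolding q_def by blast
    then show ?thesis
      using 3 nrm_of_nat_mult_p[of r] unfolding q_def[symmetric] by (simp add: nrm_mult nrm_power)
  qed
qed

lemma nrm_nabla_prime_power_le:
  assumes "s \<ge> 1" and bound: "\<And>x. x \<in> Zp nrm \<Longrightarrow> nrm (f x) \<le> M" "M \<ge> 0" and "x \<in> Zp nrm"
  shows "nrm ((nabla ^^ p ^ s) f x) \<le> max (nrm (f (x + of_nat (p ^ s)) - f x)) (M / real p)"
proof -
  define q where "q = p ^ s"
  define E where "E i = ((-1) ^ (q + i) * of_nat (q choose i)
                         - (if i = q then 1 else 0) + (if i = 0 then 1 else 0) :: 'a)" for i
  have "(\<Sum>i\<le>q. E i * f (x + of_nat i))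
      = (\<Sum>i\<le>q. (-1) ^ (q + i) * of_nat (q choose i) * f (x + of_nat i))
        - (\<Sum>i\<le>q. if i = q then f (x + of_nat i) else 0)
        + (\<Sum>i\<le>q. if i = 0 then f (x + of_nat i) else 0)"
    unfolding E_def sum_subtractf[symmetric] sum.distrib[symmetric]
    by (intro sum.cong refl) (simp add: algebra_simps)
  then have split: "(nabla ^^ q) f x = (f (x + of_nat q) - f x) + (\<Sum>i\<le>q. E i * f (x + of_nat i))"
    by (simp add: nabla_funpow_explicit)
  have "nrm (E i * f (x + of_nat i)) \<le> M / real p" if "i \<le> q" for i
  proof -
    have "nrm (E i) * nrm (f (x + of_nat i)) \<le> 1 / real p * M"
      using nrm_nabla_prime_power_coeff[OF assms(1)] bound Zp_add[OF assms(4) Zp_of_nat] that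
      unfolding E_def q_def by (intro mult_mono) (simp_all add: nrm_nonneg)
    then show ?thesis by (simp add: nrm_mult)
  qed
  then have "nrm (\<Sum>i\<le>q. E i * f (x + of_nat i)) \<le> M / real p"
    using assms(3) by (intro nrm_sum_le) simp_all
  then show ?thesis
    unfolding q_def[symmetric] split by (rule order_trans[OF nrm_add_le_max max.mono[OF order_refl]])
qed

lemma nabla_funpow_mult_prime_power_le:
  assumes "s \<ge> 1" and bound: "\<And>x. x \<in> Zp nrm \<Longrightarrow> nrm (f x) \<le> M" "M \<ge> 0"
    and translate: "\<And>x. x \<in> Zp nrm \<Longrightarrow> nrm (f (x + of_nat (p ^ s)) - f x) \<le> e" "e \<ge> 0"
    and "x \<in> Zp nrm"
  shows "nrm ((nabla ^^ (k * p ^ s)) f x) \<le> max e (M * (1 / real p) ^ k)"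
  using assms(6)
proof (induction k arbitrary: x)
  case (Suc k)
  define h where "h = (nabla ^^ (k * p ^ s)) f"
  have "nrm ((nabla ^^ p ^ s) h x)
      \<le> max (nrm (h (x + of_nat (p ^ s)) - h x)) (max e (M * (1 / real p) ^ k) / real p)"
    using Suc assms(5) unfolding h_def by (intro nrm_nabla_prime_power_le assms(1)) simp_all
  also have "\<dots> \<le> max e (M * (1 / real p) ^ Suc k)"
  proof -
    have "nrm (h (x + of_nat (p ^ s)) - h x) \<le> e"
      unfolding h_def using translate(1) Suc.prems by (rule nabla_funpow_translate_le)
    moreover have "e / real p \<le> e / 1" using assms(5) p_ge_2 by (intro divide_left_mono) auto
    ultimately show ?thesis using p_ge_2 by (auto simp: max_divide_distrib_right)
  qed
  finally show ?case unfolding h_def by (simp add: funpow_add add.commute)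
qed (use bound in \<open>simp add: le_max_iff_disj\<close>)

lemma cont_Zp_mahler_null:
  assumes cont: "cont_Zp nrm f" shows "nrm_null (mahler f)"
  unfolding nrm_null_def
proof (intro allI impI)
  fix e :: real assume e: "e > 0"
  obtain M where M: "M \<ge> 0" "\<And>x. x \<in> Zp nrm \<Longrightarrow> nrm (f x) \<le> M"
    using cont_Zp_bounded[OF cont] by blast
  obtain t where t: "\<And>u v. u \<in> Zp nrm \<Longrightarrow> v \<in> Zp nrm \<Longrightarrow>
      nrm (u - v) \<le> (1 / real p) ^ t \<Longrightarrow> nrm (f u - f v) < e / 2"
    using cont_Zp_imp_unif_cont_upto[OF cont, of "e / 2"] e unfolding unif_cont_upto_def by auto
  have translate: "nrm (f (x + of_nat (p ^ Suc t)) - f x) \<le> e / 2" if "x \<in> Zp nrm" for x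
  proof -
    have "nrm ((x + of_nat (p ^ Suc t)) - x) \<le> (1 / real p) ^ t"
      using inv_p_power_antimono[of t "Suc t"]
      by (simp only: add_diff_cancel_left' of_nat_power nrm_of_p_power le_SucI order_refl)
    then show ?thesis using less_imp_le[OF t[OF Zp_add[OF that Zp_of_nat] that]] by blast
  qed
  obtain k where k: "(1 / real p) ^ k < e / (M + 1)"
    using inv_p_power_small M(1) e by (meson add_nonneg_pos divide_pos_pos zero_less_one)
  have "M * (1 / real p) ^ k \<le> (M + 1) * (1 / real p) ^ k"
    using inv_p_pos by (simp add: mult_right_mono)
  also have "\<dots> < e" using k M(1) by (simp add: less_divide_eq mult.commute)
  finally have "M * (1 / real p) ^ k < e" .
  have "nrm (mahler f n) < e" if n: "n \<ge> k * p ^ Suc t" for n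
  proof -
    obtain m where "n = m + k * p ^ Suc t" using le_add_diff_inverse2[OF n] by metis
    then have "(nabla ^^ n) f = (nabla ^^ m) ((nabla ^^ (k * p ^ Suc t)) f)"
      by (simp add: funpow_add)
    moreover have "nrm ((nabla ^^ (k * p ^ Suc t)) f x) \<le> max (e / 2) (M * (1 / real p) ^ k)"
      if "x \<in> Zp nrm" for x
      using translate M e that by (intro nabla_funpow_mult_prime_power_le) simp_all
    ultimately have "nrm (mahler f n) \<le> max (e / 2) (M * (1 / real p) ^ k)"
      unfolding mahler_def using nabla_funpow_bounded Zp_of_nat[of 0] by simp
    then show ?thesis using \<open>M * (1 / real p) ^ k < e\<close> e by linarith
  qed
  then show "\<exists>K. \<forall>n\<ge>K. nrm (mahler f n) < e" by blast
qed

section \<open>Continuity at a point and uniform limits\<close>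

definition Zp_continuous_at :: "'a \<Rightarrow> ('a \<Rightarrow> 'a) \<Rightarrow> bool" where
  "Zp_continuous_at x f \<longleftrightarrow>
     (\<forall>e>0. \<exists>d>0. \<forall>z\<in>Zp nrm. nrm (z - x) < d \<longrightarrow> nrm (f z - f x) < e)"

lemma Zp_continuous_at_const: "Zp_continuous_at x (\<lambda>z. c)"
  unfolding Zp_continuous_at_def by (auto intro!: exI[of _ 1])

lemma Zp_continuous_at_add:
  assumes "Zp_continuous_at x f" "Zp_continuous_at x g"
  shows "Zp_continuous_at x (\<lambda>z. f z + g z)"
  unfolding Zp_continuous_at_def
proof (intro allI impI)
  fix e :: real assume e: "e > 0"
  obtain d1 where d1: "d1 > 0"
    "\<And>z. z \<in> Zp nrm \<Longrightarrow> nrm (z - x) < d1 \<Longrightarrow> nrm (f z - f x) < e"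
    using assms(1) e unfolding Zp_continuous_at_def by blast
  obtain d2 where d2: "d2 > 0"
    "\<And>z. z \<in> Zp nrm \<Longrightarrow> nrm (z - x) < d2 \<Longrightarrow> nrm (g z - g x) < e"
    using assms(2) e unfolding Zp_continuous_at_def by blast
  have "nrm ((f z + g z) - (f x + g x)) < e" if "z \<in> Zp nrm" "nrm (z - x) < min d1 d2" for z
  proof -
    have "nrm ((f z - f x) + (g z - g x)) < e"
      using d1(2) d2(2) that by (intro nrm_add_less) simp_all
    then show ?thesis by (simp add: algebra_simps)
  qed
  then show "\<exists>d>0. \<forall>z\<in>Zp nrm. nrm (z - x) < d \<longrightarrow> nrm ((f z + g z) - (f x + g x)) < e"
    using d1(1) d2(1) by (intro exI[of _ "min d1 d2"]) auto
qed

lemma Zp_continuous_at_mult: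
  assumes "Zp_continuous_at x f" "Zp_continuous_at x g"
  shows "Zp_continuous_at x (\<lambda>z. f z * g z)"
  unfolding Zp_continuous_at_def
proof (intro allI impI)
  fix e :: real assume e: "e > 0"
  define B where "B = max (nrm (f x)) (nrm (g x)) + 1"
  have B: "B \<ge> 1" "nrm (f x) < B" "nrm (g x) < B" unfolding B_def using nrm_nonneg[of "f x"] by auto
  then have eB: "e / B > 0" using e by simp
  obtain d1 where d1: "d1 > 0"
    "\<And>z. z \<in> Zp nrm \<Longrightarrow> nrm (z - x) < d1 \<Longrightarrow> nrm (f z - f x) < e / B"
    using assms(1) eB unfolding Zp_continuous_at_def by blast
  have "min 1 (e / B) > 0" using eB by simp
  then obtain d2 where d2: "d2 > 0"
    "\<And>z. z \<in> Zp nrm \<Longrightarrow> nrm (z - x) < d2 \<Longrightarrow> nrm (g z - g x) < min 1 (e / B)"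
    using assms(2) unfolding Zp_continuous_at_def by blast
  have "nrm (f z * g z - f x * g x) < e" if z: "z \<in> Zp nrm" "nrm (z - x) < min d1 d2" for z
  proof -
    have g: "nrm (g z - g x) < 1" "nrm (g z - g x) < e / B" and f: "nrm (f z - f x) < e / B"
      using d1(2) d2(2) z by auto
    have "nrm (g z - g x + g x) < B"
      using g(1) B by (intro nrm_add_less) simp_all
    then have "nrm (g z) < B" by simp
    then have "nrm (f z - f x) * nrm (g z) < e / B * B"
      using f eB by (intro mult_strict_mono) (simp_all add: nrm_nonneg)
    moreover have "nrm (f x) * nrm (g z - g x) < B * (e / B)"
      using B(2) g(2) B(1) by (intro mult_strict_mono) (simp_all add: nrm_nonneg)
    ultimately have "nrm ((f z - f x) * g z) < e" "nrm (f x * (g z - g x)) < e"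
      using B(1) by (simp_all add: nrm_mult)
    moreover have "f z * g z - f x * g x = (f z - f x) * g z + f x * (g z - g x)"
      by (simp add: algebra_simps)
    ultimately show ?thesis by (metis nrm_add_less)
  qed
  then show "\<exists>d>0. \<forall>z\<in>Zp nrm. nrm (z - x) < d \<longrightarrow> nrm (f z * g z - f x * g x) < e"
    using d1(1) d2(1) by (intro exI[of _ "min d1 d2"]) auto
qed

lemma Zp_continuous_at_sum:
  "(\<And>i. i \<in> A \<Longrightarrow> Zp_continuous_at x (f i)) \<Longrightarrow> Zp_continuous_at x (\<lambda>z. \<Sum>i\<in>A. f i z)"
  by (induction A rule: infinite_finite_induct)
     (simp_all add: Zp_continuous_at_const Zp_continuous_at_add)

lemma Zp_continuous_at_gbinomial:
  assumes "x \<in> Zp nrm" shows "Zp_continuous_at x (\<lambda>z. z gchoose k)"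
  unfolding Zp_continuous_at_def
proof (intro allI impI)
  fix e :: real assume e: "e > 0"
  have "nrm ((z gchoose k) - (x gchoose k)) < e"
    if "z \<in> Zp nrm" "nrm (z - x) < e * nrm (fact k :: 'a)" for z
  proof -
    have "nrm (z - x) / nrm (fact k :: 'a) < e"
      using that(2) nrm_fact_pos[of k] by (simp add: pos_divide_less_eq)
    then show ?thesis using nrm_gbinomial_diff_le[OF that(1) assms, of k] by simp
  qed
  then show "\<exists>d>0. \<forall>z\<in>Zp nrm. nrm (z - x) < d \<longrightarrow> nrm ((z gchoose k) - (x gchoose k)) < e"
    using e nrm_fact_pos[of k] by (intro exI[of _ "e * nrm (fact k :: 'a)"]) auto
qed

lemma cont_Zp_imp_Zp_continuous_at_shift:
  assumes "cont_Zp nrm f" "x \<in> Zp nrm"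
  shows "Zp_continuous_at x (\<lambda>z. f (z - of_nat k))"
  unfolding Zp_continuous_at_def
proof (intro allI impI)
  fix e :: real assume "e > 0"
  moreover have "x - of_nat k \<in> Zp nrm" using Zp_diff[OF assms(2) Zp_of_nat] .
  ultimately obtain d where d: "d > 0" "\<And>u. u \<in> Zp nrm \<Longrightarrow> nrm (u - (x - of_nat k)) < d \<Longrightarrow>
      nrm (f u - f (x - of_nat k)) < e"
    using assms(1) unfolding cont_Zp_def by blast
  show "\<exists>d>0. \<forall>z\<in>Zp nrm. nrm (z - x) < d \<longrightarrow> nrm (f (z - of_nat k) - f (x - of_nat k)) < e"
  proof (intro exI[of _ d] conjI ballI impI)
    fix z assume "z \<in> Zp nrm" "nrm (z - x) < d"
    then show "nrm (f (z - of_nat k) - f (x - of_nat k)) < e"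
      using d(2)[OF Zp_diff[OF _ Zp_of_nat]] by simp
  qed (fact d(1))
qed

lemma Zp_continuous_at_nsum:
  assumes cont: "\<And>k. Zp_continuous_at x (\<lambda>z. t z k)" and null: "uniformly_null_on (Zp nrm) t"
    and x: "x \<in> Zp nrm"
  shows "Zp_continuous_at x (\<lambda>z. nsum nrm (t z))"
  unfolding Zp_continuous_at_def
proof (intro allI impI)
  fix e :: real assume e: "e > 0"
  then have "e / 2 > 0" by simp
  then obtain K where K: "\<And>k z. k \<ge> K \<Longrightarrow> z \<in> Zp nrm \<Longrightarrow> nrm (t z k) < e / 2"
    using null unfolding uniformly_null_on_def by blast
  define S where "S z = (\<Sum>k<K. t z k)" for z
  have tail: "nrm (nsum nrm (t z) - S z) < e" if "z \<in> Zp nrm" for z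
  proof -
    have "nrm_null (t z)"
      using null that unfolding uniformly_null_on_def nrm_null_def by blast
    then have "nrm (nsum nrm (t z) - S z) \<le> e / 2"
      unfolding S_def using K[OF _ that] e
      by (intro nsums_tail_le nsums_nsum_if_null) (auto intro: less_imp_le)
    then show ?thesis using e by simp
  qed
  have "Zp_continuous_at x S"
    unfolding S_def by (intro Zp_continuous_at_sum cont)
  then obtain d where d: "d > 0" "\<And>z. z \<in> Zp nrm \<Longrightarrow> nrm (z - x) < d \<Longrightarrow> nrm (S z - S x) < e"
    using e unfolding Zp_continuous_at_def by blast
  have "nrm (nsum nrm (t z) - nsum nrm (t x)) < e" if "z \<in> Zp nrm" "nrm (z - x) < d" for z
  proof -
    have "nrm (S z - nsum nrm (t x)) < e"
      using d(2)[OF that] tail[OF x] nrm_minus_commute[of "S x"] nrm_ultrametric_less by metis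
    with tail[OF that(1)] show ?thesis by (rule nrm_ultrametric_less)
  qed
  then show "\<exists>d>0. \<forall>z\<in>Zp nrm. nrm (z - x) < d \<longrightarrow> nrm (nsum nrm (t z) - nsum nrm (t x)) < e"
    using d(1) by blast
qed

lemma Zp_continuous_at_eq_on_nat:
  assumes "Zp_continuous_at x f" "Zp_continuous_at x g" "x \<in> Zp nrm"
    and "\<And>n. f (of_nat n) = g (of_nat n)"
  shows "f x = g x"
proof (rule ccontr)
  assume "f x \<noteq> g x"
  then have e: "nrm (f x - g x) > 0" using nrm_nonneg nrm_eq_0_iff by (simp add: less_le)
  obtain d1 where d1: "d1 > 0"
    "\<And>z. z \<in> Zp nrm \<Longrightarrow> nrm (z - x) < d1 \<Longrightarrow> nrm (f z - f x) < nrm (f x - g x)"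
    using assms(1) e unfolding Zp_continuous_at_def by blast
  obtain d2 where d2: "d2 > 0"
    "\<And>z. z \<in> Zp nrm \<Longrightarrow> nrm (z - x) < d2 \<Longrightarrow> nrm (g z - g x) < nrm (f x - g x)"
    using assms(2) e unfolding Zp_continuous_at_def by blast
  obtain n where "nrm (x - of_nat n) < min d1 d2"
    using Zp_approx_nat[OF assms(3)] d1(1) d2(1) by (meson min_less_iff_conj)
  then have "nrm (of_nat n - x) < d1" "nrm (of_nat n - x) < d2"
    by (simp_all add: nrm_minus_commute[of x])
  then have "nrm (f (of_nat n) - f x) < nrm (f x - g x)" "nrm (g (of_nat n) - g x) < nrm (f x - g x)"
    using d1(2) d2(2) Zp_of_nat by blast+
  then have "nrm (f x - f (of_nat n)) < nrm (f x - g x)" "nrm (f (of_nat n) - g x) < nrm (f x - g x)"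
    using assms(4)[of n] nrm_minus_commute[of "f x" "f (of_nat n)"]
      nrm_minus_commute[of "g x" "g (of_nat n)"] by simp_all
  then have "nrm (f x - g x) < nrm (f x - g x)" by (rule nrm_ultrametric_less)
  then show False by simp
qed

end

section \<open>The two sides of the identity\<close>

lemma sum_binomial_convolution_swap:
  fixes a b :: "nat \<Rightarrow> 'a::comm_ring_1"
  shows "(\<Sum>k\<le>m. a k * of_nat (m choose k) * (\<Sum>j\<le>m - k. of_nat (m - k choose j) * b j))
       = (\<Sum>n\<le>m. (\<Sum>i\<le>n. of_nat (n choose i) * a i * b (n - i)) * of_nat (m choose n))"
proof -
  define g where "g i j = of_nat (m choose i) * of_nat (m - i choose j) * a i * b j" for i j
  have "(\<Sum>n\<le>m. (\<Sum>i\<le>n. of_nat (n choose i) * a i * b (n - i)) * of_nat (m choose n))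
      = (\<Sum>n\<le>m. \<Sum>i\<le>n. g i (n - i))"
    unfolding sum_distrib_right
  proof (intro sum.cong refl)
    fix n i assume "n \<in> {..m}" "i \<in> {..n}"
    then have "(m choose n) * (n choose i) = (m choose i) * (m - i choose (n - i))"
      by (intro choose_mult) auto
    then have "(of_nat (n choose i) * of_nat (m choose n) :: 'a)
             = of_nat (m choose i) * of_nat (m - i choose (n - i))"
      by (metis mult.commute of_nat_mult)
    then show "of_nat (n choose i) * a i * b (n - i) * of_nat (m choose n) = g i (n - i)"
      unfolding g_def by (metis (no_types, lifting) mult.assoc mult.commute)
  qed
  also have "\<dots> = (\<Sum>(i, j)\<in>{(i, j). i + j \<le> m}. g i j)"
    by (rule sum.triangle_reindex_eq[symmetric])
  also have "{(i, j). i + j \<le> m} = Sigma {..m} (\<lambda>i. {..m - i})" by auto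
  also have "(\<Sum>(i, j)\<in>Sigma {..m} (\<lambda>i. {..m - i}). g i j) = (\<Sum>i\<le>m. \<Sum>j\<le>m - i. g i j)"
    by (rule sum.Sigma[symmetric]) auto
  also have "\<dots> = (\<Sum>k\<le>m. a k * of_nat (m choose k) * (\<Sum>j\<le>m - k. of_nat (m - k choose j) * b j))"
    unfolding g_def sum_distrib_left by (intro sum.cong refl) (simp add: mult_ac)
  finally show ?thesis ..
qed

context complete_padic_field
begin

lemma nrm_null_le: "nrm_null u \<Longrightarrow> (\<And>n. nrm (v n) \<le> nrm (u n)) \<Longrightarrow> nrm_null v"
  unfolding nrm_null_def by (meson le_less_trans)

lemma nrm_null_binomial_convolution:
  assumes a: "nrm_null a" "\<And>k. nrm (a k) \<le> M" and b: "nrm_null b" "\<And>k. nrm (b k) \<le> M"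
  shows "nrm_null (\<lambda>n. \<Sum>k\<le>n. of_nat (n choose k) * a k * b (n - k))"
  unfolding nrm_null_def
proof (intro allI impI)
  fix e :: real assume e: "e > 0"
  have M: "M \<ge> 0" using a(2)[of 0] nrm_nonneg[of "a 0"] by linarith
  then have eM: "e / (M + 1) > 0" using e by simp
  obtain K1 where K1: "\<And>k. k \<ge> K1 \<Longrightarrow> nrm (a k) < e / (M + 1)"
    using a(1) eM unfolding nrm_null_def by blast
  obtain K2 where K2: "\<And>k. k \<ge> K2 \<Longrightarrow> nrm (b k) < e / (M + 1)"
    using b(1) eM unfolding nrm_null_def by blast
  have "nrm (of_nat (n choose k) * a k * b (n - k)) < e" if "n \<ge> K1 + K2" for n k
  proof -
    have "nrm (of_nat (n choose k) * a k * b (n - k))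
        = nrm (of_nat (n choose k) :: 'a) * (nrm (a k) * nrm (b (n - k)))"
      by (simp add: nrm_mult)
    also have "\<dots> \<le> nrm (a k) * nrm (b (n - k))"
      using nrm_of_nat_le_1 by (intro mult_left_le_one_le) (simp_all add: nrm_nonneg)
    also have "\<dots> < e"
    proof (cases "k \<ge> K1")
      case True
      have "nrm (a k) * nrm (b (n - k)) \<le> nrm (a k) * (M + 1)"
        using b(2)[of "n - k"] by (intro mult_left_mono) (simp_all add: nrm_nonneg)
      also have "\<dots> < e / (M + 1) * (M + 1)"
        using K1[OF True] M by (intro mult_strict_right_mono) simp_all
      finally show ?thesis using M by simp
    next
      case False
      have "nrm (a k) * nrm (b (n - k)) \<le> (M + 1) * nrm (b (n - k))"
        using a(2)[of k] by (intro mult_right_mono) (simp_all add: nrm_nonneg)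
      also have "\<dots> < (M + 1) * (e / (M + 1))"
        using K2[of "n - k"] False that M by (intro mult_strict_left_mono) simp_all
      finally show ?thesis using M by simp
    qed
    finally show ?thesis .
  qed
  then show "\<exists>K. \<forall>n\<ge>K. nrm (\<Sum>k\<le>n. of_nat (n choose k) * a k * b (n - k)) < e"
    using e by (blast intro: nrm_sum_less)
qed

lemma Sop_of_nat:
  "Sop nrm y f (of_nat m)
     = (\<Sum>k\<le>m. (-1) ^ k * fact k * (y gchoose k) * of_nat (m choose k) * f (of_nat (m - k)))"
  unfolding Sop_def
  by (subst nsum_eq_sum_atMost[of m])
     (auto simp: binomial_gbinomial[symmetric] binomial_eq_0 of_nat_diff intro!: sum.cong)

lemma conv_of_nat:
  "conv nrm g f (of_nat m)
     = (\<Sum>n\<le>m. (\<Sum>k\<le>n. of_nat (n choose k) * mahler g k * mahler f (n - k)) * of_nat (m choose n))"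
  unfolding conv_def
  by (subst nsum_eq_sum_atMost[of m]) (auto simp: binomial_gbinomial[symmetric] binomial_eq_0)

lemma mahler_one_minus_x_pow: "mahler (one_minus_x_pow nrm y) k = (-1) ^ k * fact k * (y gchoose k)"
  by (rule mahler_eqI) (simp add: one_minus_x_pow_def Sop_of_nat mult_ac)

lemma Sop_eq_conv_of_nat: "Sop nrm y f (of_nat m) = conv nrm (one_minus_x_pow nrm y) f (of_nat m)"
  unfolding Sop_of_nat conv_of_nat mahler_one_minus_x_pow mahler_expansion_of_nat[of f]
  by (rule sum_binomial_convolution_swap)

lemma Zp_continuous_at_Sop:
  assumes f: "cont_Zp nrm f" and y: "y \<in> Zp nrm" and x: "x \<in> Zp nrm"
  shows "Zp_continuous_at x (Sop nrm y f)"
proof -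
  obtain M where M: "\<And>z. z \<in> Zp nrm \<Longrightarrow> nrm (f z) \<le> M"
    using cont_Zp_bounded[OF f] by blast
  define t where "t z k = (-1) ^ k * (y gchoose k) * (z gchoose k) * f (z - of_nat k)" for z k
  have "uniformly_null_on (Zp nrm) (\<lambda>z k. fact k * t z k)"
  proof (rule uniformly_null_on_mult[OF nrm_fact_null])
    fix z k assume z: "z \<in> Zp nrm"
    have "nrm (t z k) = nrm (y gchoose k) * nrm (z gchoose k) * nrm (f (z - of_nat k))"
      unfolding t_def by (simp add: nrm_mult nrm_power)
    also have "\<dots> \<le> 1 * 1 * M"
      using nrm_gbinomial_le_1[OF y] nrm_gbinomial_le_1[OF z] M[OF Zp_diff[OF z Zp_of_nat]]
      by (intro mult_mono) (simp_all add: nrm_nonneg)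
    finally show "nrm (t z k) \<le> M" by simp
  qed
  moreover have "Sop nrm y f = (\<lambda>z. nsum nrm (\<lambda>k. fact k * t z k))"
    by (simp add: Sop_def t_def mult_ac fun_eq_iff)
  ultimately show ?thesis
    unfolding t_def using x f
    by (auto intro!: Zp_continuous_at_nsum Zp_continuous_at_mult Zp_continuous_at_const
                     Zp_continuous_at_gbinomial cont_Zp_imp_Zp_continuous_at_shift)
qed

lemma Zp_continuous_at_conv_one_minus_x_pow:
  assumes f: "cont_Zp nrm f" and y: "y \<in> Zp nrm" and x: "x \<in> Zp nrm"
  shows "Zp_continuous_at x (conv nrm (one_minus_x_pow nrm y) f)"
proof -
  obtain M where M: "\<And>z. z \<in> Zp nrm \<Longrightarrow> nrm (f z) \<le> M"
    using cont_Zp_bounded[OF f] by blast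
  define c where "c n = (\<Sum>k\<le>n. of_nat (n choose k) * mahler (one_minus_x_pow nrm y) k
                                  * mahler f (n - k))" for n
  have "nrm_null c"
    unfolding c_def
  proof (rule nrm_null_binomial_convolution[where M = "max 1 M"])
    have a_le: "nrm (mahler (one_minus_x_pow nrm y) k) \<le> nrm (fact k :: 'a)" for k
      using nrm_gbinomial_le_1[OF y, of k] nrm_fact_pos[of k]
      by (simp add: mahler_one_minus_x_pow nrm_mult nrm_power mult_left_le)
    with nrm_fact_null show "nrm_null (mahler (one_minus_x_pow nrm y))" by (rule nrm_null_le)
    show "nrm (mahler (one_minus_x_pow nrm y) k) \<le> max 1 M" for k
      using a_le[of k] nrm_fact_le_1[of k] by (meson order_trans max.cobounded1)
    show "nrm_null (mahler f)" by (rule cont_Zp_mahler_null[OF f])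
    have "nrm ((nabla ^^ k) f 0) \<le> M" for k
      using Zp_of_nat[of 0] by (intro nabla_funpow_bounded[of f M]) (simp_all add: M)
    then show "nrm (mahler f k) \<le> max 1 M" for k
      unfolding mahler_def by (simp add: le_max_iff_disj)
  qed
  then have "uniformly_null_on (Zp nrm) (\<lambda>z n. c n * (z gchoose n))"
    using nrm_gbinomial_le_1 by (rule uniformly_null_on_mult)
  moreover have "conv nrm (one_minus_x_pow nrm y) f = (\<lambda>z. nsum nrm (\<lambda>n. c n * (z gchoose n)))"
    by (simp add: conv_def c_def fun_eq_iff)
  ultimately show ?thesis
    using x by (auto intro!: Zp_continuous_at_nsum Zp_continuous_at_mult Zp_continuous_at_const
                             Zp_continuous_at_gbinomial)
qed

end

theorem proposition6p7:
  fixes p :: nat and nrm :: "'a::field_char_0 \<Rightarrow> real"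
    and phi :: "'a \<Rightarrow> 'a" and y :: 'a
  assumes "is_Cp p nrm" and "cont_Zp nrm phi" and "y \<in> Zp nrm"
  shows "\<forall>x\<in>Zp nrm. Sop nrm y phi x = conv nrm (one_minus_x_pow nrm y) phi x"
proof -
  interpret complete_padic_field p nrm
    using assms(1) by (rule is_Cp_imp_complete_padic_field)
  show ?thesis
  proof
    fix x assume x: "x \<in> Zp nrm"
    show "Sop nrm y phi x = conv nrm (one_minus_x_pow nrm y) phi x"
      using Zp_continuous_at_Sop[OF assms(2,3) x] Zp_continuous_at_conv_one_minus_x_pow[OF assms(2,3) x]
        x Sop_eq_conv_of_nat by (rule Zp_continuous_at_eq_on_nat)
  qed
qed

end
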